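(* In the Poisson bipole Aloha model described in the context, let $R_1$ be the distance from the typical transmitter $X_0=0$ to its closest receiver other than its own receiver $y_0$, and let $\psi$ be the optimal MAP of the typical node with spatial information $S=B_0(R_1)$ (the disk of radius $R_1$ centered at $0$). For $0\le\rho\le1$ let $$\xi(\rho)=\inf\left\{x\ge0:\ \frac{\rho}{x^{\beta}/(Tr^{\beta})+1-\rho}+I(\rho,B_0(x))<1\right\},\qquad I(\rho,B_0(x))=2\pi\lambda r^2\int_{x/r}^{\infty}\frac{\rho s}{s^{\beta}/T+1-\rho}{\rm d}s.$$ Then $\mathbb{P}^0(\psi>\rho)=\exp(-\lambda\pi\xi(\rho)^2)$ for $\rho<1$, and $\mathbb{P}^0(\psi=1)=\exp(-\lambda\pi\xi(1)^2)$.
   Context: Model: transmitters $\Phi=\{X_i\}$ form a homogeneous Poisson point process of intensity $\lambda$ on $\mathbb{R}^2$; receiver $y_i=X_i+r_i$ with $|r_i|=r$, angles i.i.d. uniform independent of $\Phi$; $\bar\Phi=\{y_i\}$; $\beta>2$, $T>0$. $\mathbb{P}^0$ is the Palm law under which a typical transmitter $X_0=0$ with receiver $y_0$ is added. With $b_{0j}=|y_j|^{\beta}/(Tr^{\beta})$, the optimal MAP with spatial information $S$ is the unique $\psi\in(0,1)$ solving $\frac1\psi=\sum_{y_j\in S,j\ne0}\frac1{1+b_{0j}-\psi}+\int_{\mathbb{R}^2\setminus S}\frac{\lambda\,{\rm d}y}{1+|y|^\beta/(Tr^\beta)-\psi}$ if $\sum_{y_j\in S,j\ne0}1/b_{0j}+\int_{\mathbb{R}^2\setminus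 S}\lambda\,{\rm d}y/(|y|^\beta/(Tr^\beta))>1$, and $\psi=1$ otherwise; for $S=B_0(R_1)$ this reads $\frac1\psi=\frac{1}{(R_1/r)^\beta/T+1-\psi}+2\pi\lambda r^2\int_{R_1/r}^\infty\frac{s}{s^\beta/T+1-\psi}{\rm d}s$. *)

theory Defs
  imports "HOL-Probability.Probability"
begin

text \<open>Poisson point process (simple, i.e. a random set of points) on a measurable space
  with intensity measure mu, given on a probability space M: for every measurable set A
  of finite intensity the number of points in A is a.s. finite and Poisson distributed
  with mean mu(A), and counts in finitely many pairwise disjoint such sets are independent.\<close>
definition poisson_pp :: "'w measure \<Rightarrow> 'a measure \<Rightarrow> ('w \<Rightarrow> 'a set) \<Rightarrow> bool" where
  "poisson_pp M mu N \<longleftrightarrow>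
     prob_space M \<and>
     (\<forall>\<omega>\<in>space M. N \<omega> \<subseteq> space mu) \<and>
     (\<forall>A\<in>sets mu. emeasure mu A < \<infinity> \<longrightarrow>
        (\<forall>k::nat. {\<omega>\<in>space M. finite (N \<omega> \<inter> A) \<and> card (N \<omega> \<inter> A) = k} \<in> sets M \<and>
           measure M {\<omega>\<in>space M. finite (N \<omega> \<inter> A) \<and> card (N \<omega> \<inter> A) = k}
             = measure mu A ^ k / fact k * exp (- measure mu A))) \<and>
     (\<forall>(I::nat set) A. finite I \<longrightarrow> disjoint_family_on A I \<longrightarrow>
        (\<forall>i\<in>I. A i \<in> sets mu \<and> emeasure mu (A i) < \<infinity>) \<longrightarrow>
        prob_space.indep_vars M (\<lambda>_. count_space UNIV) (\<lambda>i \<omega>. card (N \<omega> \<inter> A i)) I)"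

text \<open>Marked intensity of the bipole model: transmitter location x in R^2 (= complex plane)
  with intensity lam * Lebesgue, independent mark = receiver angle theta uniform on [0, 2 pi).\<close>
definition bipole_intensity :: "real \<Rightarrow> (complex \<times> real) measure" where
  "bipole_intensity lam = density (lborel \<Otimes>\<^sub>M lborel)
      (\<lambda>(x, \<theta>). ennreal (lam / (2 * pi)) * indicator {0..<2 * pi} \<theta>)"

definition receiver :: "real \<Rightarrow> complex \<times> real \<Rightarrow> complex" where
  "receiver r p = fst p + complex_of_real r * cis (snd p)"

definition bval :: "real \<Rightarrow> real \<Rightarrow> real \<Rightarrow> complex \<Rightarrow> real" where
  "bval T r \<beta> y = cmod y powr \<beta> / (T * r powr \<beta>)"

text \<open>Optimal MAP of the typical node with spatial information S, given the set Ys of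
  receivers y_j (j \<noteq> 0) of the other links.\<close>
definition opt_MAP :: "real \<Rightarrow> real \<Rightarrow> real \<Rightarrow> real \<Rightarrow> complex set \<Rightarrow> complex set \<Rightarrow> real" where
  "opt_MAP lam T r \<beta> Ys S =
     (if (\<Sum>y\<in>Ys \<inter> S. 1 / bval T r \<beta> y) + (LINT y:-S|lborel. lam / bval T r \<beta> y) > 1
      then (THE \<psi>. 0 < \<psi> \<and> \<psi> < 1 \<and>
              1 / \<psi> = (\<Sum>y\<in>Ys \<inter> S. 1 / (1 + bval T r \<beta> y - \<psi>))
                       + (LINT y:-S|lborel. lam / (1 + bval T r \<beta> y - \<psi>)))
      else 1)"

definition closest_rx :: "real \<Rightarrow> (complex \<times> real) set \<Rightarrow> real" where
  "closest_rx r P = Inf (cmod ` receiver r ` P)"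

text \<open>The MAP psi of the typical node with S = B_0(R_1) (closed disk) for the configuration P
  of the other marked transmitters.\<close>
definition psi_R1 :: "real \<Rightarrow> real \<Rightarrow> real \<Rightarrow> real \<Rightarrow> (complex \<times> real) set \<Rightarrow> real" where
  "psi_R1 lam T r \<beta> P = opt_MAP lam T r \<beta> (receiver r ` P) (cball 0 (closest_rx r P))"

definition I_fun :: "real \<Rightarrow> real \<Rightarrow> real \<Rightarrow> real \<Rightarrow> real \<Rightarrow> real \<Rightarrow> real" where
  "I_fun lam T r \<beta> \<rho> x =
     2 * pi * lam * r\<^sup>2 * (LINT s:{x / r<..}|lborel. \<rho> * s / (s powr \<beta> / T + 1 - \<rho>))"

text \<open>xi(rho); the infimum is taken over x > 0 (the defining set is upward
  closed, so this equals the infimum over x >= 0, and avoids the singular point x = 0, rho = 1).\<close>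
definition xi :: "real \<Rightarrow> real \<Rightarrow> real \<Rightarrow> real \<Rightarrow> real \<Rightarrow> real" where
  "xi lam T r \<beta> \<rho> =
     Inf {x. 0 < x \<and> \<rho> / (x powr \<beta> / (T * r powr \<beta>) + 1 - \<rho>) + I_fun lam T r \<beta> \<rho> x < 1}"

end

theory Submission
  imports Defs "HOL-Real_Asymp.Real_Asymp"
begin

text \<open>
  The receivers \<open>y = x + r e^(i\<theta>)\<close> form a Poisson process as well: every angular section of
  the disc \<open>|y| \<le> a\<close> is a disc of area \<open>\<pi> a\<^sup>2\<close>, so its intensity is \<open>\<lambda> \<pi> a\<^sup>2\<close>. Hence almost
  surely there is a unique nearest receiver, at distance \<open>R\<^sub>1 > 0\<close>, and both \<open>R\<^sub>1 > \<xi>\<close> and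
  \<open>R\<^sub>1 \<ge> \<xi>\<close> have probability \<open>exp (- \<lambda> \<pi> \<xi>\<^sup>2)\<close>.
  For \<open>S = B\<^sub>0(R\<^sub>1)\<close> exactly one receiver lies in \<open>S\<close>, on its boundary, and in polar coordinates
  the MAP equation reads \<open>1/\<psi> = 1/(b + 1 - \<psi>) + J(\<psi>)\<close> with \<open>b = R\<^sub>1^\<beta>/(T r^\<beta>)\<close> and \<open>J\<close>
  continuous, nonnegative and increasing. Multiplied by \<open>\<psi>\<close>, its right-hand side becomes strictly
  increasing, so \<open>\<psi> > \<rho>\<close> exactly when the criterion defining \<open>\<xi>(\<rho>)\<close> holds at \<open>x = R\<^sub>1\<close>. That
  criterion is decreasing in \<open>x\<close>, so the event \<open>\<psi> > \<rho>\<close> lies between \<open>R\<^sub>1 > \<xi>(\<rho>)\<close> and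
  \<open>R\<^sub>1 \<ge> \<xi>(\<rho>)\<close>.
\<close>

section \<open>Tail integrals of the path-loss kernel\<close>

lemma
  fixes a e :: real
  assumes "e < -1" "0 < a"
  shows set_integrable_powr_Ioi: "set_integrable lborel {a<..} (\<lambda>s. s powr e)"
    and set_integral_powr_Ioi: "(LINT s:{a<..}|lborel. s powr e) = - (a powr (e + 1)) / (e + 1)"
proof -
  have "((\<lambda>s. s powr e) has_integral - (a powr (e + 1)) / (e + 1)) {a..}"
    using assms by (rule has_integral_powr_to_inf)
  then have hi: "((\<lambda>s. s powr e) has_integral - (a powr (e + 1)) / (e + 1)) {a<..}"
    by (subst has_integral_spike_set_eq[where T="{a..}"]) (auto intro: negligible_subset[of "{a}"])
  have nn: "(\<integral>\<^sup>+ s. ennreal (indicator {a<..} s * s powr e) \<partial>lborel)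
      = ennreal (- (a powr (e + 1)) / (e + 1))"
    by (rule nn_integral_has_integral_lebesgue[OF _ hi]) auto
  show si: "set_integrable lborel {a<..} (\<lambda>s. s powr e)"
    unfolding set_integrable_def
  proof (rule integrableI_bounded)
    have "(\<integral>\<^sup>+ s. ennreal (norm (indicator {a<..} s *\<^sub>R s powr e)) \<partial>lborel)
        = (\<integral>\<^sup>+ s. ennreal (indicator {a<..} s * s powr e) \<partial>lborel)"
      by (intro nn_integral_cong) (auto simp: indicator_def)
    then show "(\<integral>\<^sup>+ s. ennreal (norm (indicator {a<..} s *\<^sub>R s powr e)) \<partial>lborel) < \<infinity>"
      using nn by simp
  qed measurable
  show "(LINT s:{a<..}|lborel. s powr e) = - (a powr (e + 1)) / (e + 1)"
    using set_borel_integral_eq_integral(2)[OF si] hi by (simp add: integral_unique)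
qed

definition tail_integral :: "real \<Rightarrow> real \<Rightarrow> real \<Rightarrow> real \<Rightarrow> real" where
  "tail_integral T \<beta> a \<psi> = (LINT s:{a<..}|lborel. s / (s powr \<beta> / T + 1 - \<psi>))"

lemma tail_integrand_bounds:
  fixes T \<beta> s \<psi> :: real
  assumes "0 < T" "0 < s" "\<psi> \<le> 1"
  shows "0 < s powr \<beta> / T + 1 - \<psi>" "0 < s / (s powr \<beta> / T + 1 - \<psi>)"
    and "s / (s powr \<beta> / T + 1 - \<psi>) \<le> T * s powr (1 - \<beta>)"
proof -
  have u: "0 < s powr \<beta> / T" using assms by simp
  then show den: "0 < s powr \<beta> / T + 1 - \<psi>" using assms by linarith
  then show "0 < s / (s powr \<beta> / T + 1 - \<psi>)" using assms by simp
  have "s / (s powr \<beta> / T + 1 - \<psi>) \<le> s / (s powr \<beta> / T)"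
    using assms u den by (intro divide_left_mono mult_pos_pos) auto
  also have "\<dots> = T * s powr (1 - \<beta>)"
    using assms by (simp add: powr_diff field_simps)
  finally show "s / (s powr \<beta> / T + 1 - \<psi>) \<le> T * s powr (1 - \<beta>)" .
qed

lemma set_integrable_tail_integrand:
  fixes T \<beta> a \<psi> :: real
  assumes "0 < T" "2 < \<beta>" "0 < a" "\<psi> \<le> 1"
  shows "set_integrable lborel {a<..} (\<lambda>s. s / (s powr \<beta> / T + 1 - \<psi>))"
proof (rule set_integrable_bound)
  show "set_integrable lborel {a<..} (\<lambda>s. T * s powr (1 - \<beta>))"
    using assms by (intro set_integrable_mult_right set_integrable_powr_Ioi) auto
  show "AE s\<in>{a<..} in lborel. norm (s / (s powr \<beta> / T + 1 - \<psi>)) \<le> norm (T * s powr (1 - \<beta>))"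
  proof (intro AE_I2 impI)
    fix s :: real assume "s \<in> {a<..}"
    then have "0 < s" using assms by simp
    note bounds = tail_integrand_bounds[OF \<open>0 < T\<close> this \<open>\<psi> \<le> 1\<close>, of \<beta>]
    have "norm (s / (s powr \<beta> / T + 1 - \<psi>)) = s / (s powr \<beta> / T + 1 - \<psi>)"
      using bounds(2) by (simp only: real_norm_def abs_of_pos)
    also have "\<dots> \<le> norm (T * s powr (1 - \<beta>))"
      using bounds(3) by simp
    finally show "norm (s / (s powr \<beta> / T + 1 - \<psi>)) \<le> norm (T * s powr (1 - \<beta>))" .
  qed
qed (unfold set_borel_measurable_def, measurable)

lemma tail_integral_nonneg:
  assumes "0 < T" "0 \<le> a" "\<psi> \<le> 1"
  shows "0 \<le> tail_integral T \<beta> a \<psi>"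
  unfolding tail_integral_def set_lebesgue_integral_def using assms tail_integrand_bounds(2)[of T _ \<psi> \<beta>]
  by (intro Bochner_Integration.integral_nonneg) (auto simp: indicator_def less_imp_le)

lemma tail_integral_le:
  assumes "0 < T" "2 < \<beta>" "0 < a" "\<psi> \<le> 1"
  shows "tail_integral T \<beta> a \<psi> \<le> T * a powr (2 - \<beta>) / (\<beta> - 2)"
proof -
  have "tail_integral T \<beta> a \<psi> \<le> (LINT s:{a<..}|lborel. T * s powr (1 - \<beta>))"
    unfolding tail_integral_def using assms tail_integrand_bounds(3)[of T _ \<psi> \<beta>]
    by (intro set_integral_mono set_integrable_tail_integrand set_integrable_mult_right
        set_integrable_powr_Ioi) auto
  also have "\<dots> = T * a powr (2 - \<beta>) / (\<beta> - 2)"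
    using assms set_integral_powr_Ioi[of "1 - \<beta>" a]
    by (simp add: divide_simps) (simp add: algebra_simps)
  finally show ?thesis .
qed

lemma tail_integral_mono:
  assumes "0 < T" "2 < \<beta>" "0 < a" "\<psi>1 \<le> \<psi>2" "\<psi>2 \<le> 1"
  shows "tail_integral T \<beta> a \<psi>1 \<le> tail_integral T \<beta> a \<psi>2"
  unfolding tail_integral_def
  using assms tail_integrand_bounds(1)[of T _ \<psi>1 \<beta>] tail_integrand_bounds(1)[of T _ \<psi>2 \<beta>]
  by (intro set_integral_mono set_integrable_tail_integrand divide_left_mono mult_pos_pos) auto

lemma tail_integral_antimono:
  assumes "0 < T" "2 < \<beta>" "0 < a1" "a1 \<le> a2" "\<psi> \<le> 1"
  shows "tail_integral T \<beta> a2 \<psi> \<le> tail_integral T \<beta> a1 \<psi>"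
  unfolding tail_integral_def set_lebesgue_integral_def
proof (rule integral_mono)
  show "integrable lborel (\<lambda>s. indicator {a2<..} s *\<^sub>R (s / (s powr \<beta> / T + 1 - \<psi>)))"
    using assms set_integrable_tail_integrand[of T \<beta> a2 \<psi>] unfolding set_integrable_def by auto
  show "integrable lborel (\<lambda>s. indicator {a1<..} s *\<^sub>R (s / (s powr \<beta> / T + 1 - \<psi>)))"
    using assms set_integrable_tail_integrand[of T \<beta> a1 \<psi>] unfolding set_integrable_def by auto
  show "indicator {a2<..} s *\<^sub>R (s / (s powr \<beta> / T + 1 - \<psi>))
      \<le> indicator {a1<..} s *\<^sub>R (s / (s powr \<beta> / T + 1 - \<psi>))" for s
    using assms tail_integrand_bounds(2)[of T s \<psi> \<beta>] by (auto simp: indicator_def)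
qed

lemma tail_integrand_lipschitz:
  fixes T \<beta> s \<psi>1 \<psi>2 :: real
  assumes "0 < T" "0 < s" "\<psi>1 \<le> 1" "\<psi>2 \<le> 1"
  shows "\<bar>s / (s powr \<beta> / T + 1 - \<psi>1) - s / (s powr \<beta> / T + 1 - \<psi>2)\<bar>
         \<le> \<bar>\<psi>1 - \<psi>2\<bar> * (T\<^sup>2 * s powr (1 - 2 * \<beta>))"
proof -
  define u where "u = s powr \<beta> / T"
  have u: "0 < u" using assms by (simp add: u_def)
  have d1: "u \<le> u + 1 - \<psi>1" and d2: "u \<le> u + 1 - \<psi>2" using assms by auto
  have "s / (u + 1 - \<psi>1) - s / (u + 1 - \<psi>2) = s * (\<psi>1 - \<psi>2) / ((u + 1 - \<psi>1) * (u + 1 - \<psi>2))"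
    using u d1 d2 by (simp add: field_simps)
  then have "\<bar>s / (u + 1 - \<psi>1) - s / (u + 1 - \<psi>2)\<bar>
      = s * \<bar>\<psi>1 - \<psi>2\<bar> / ((u + 1 - \<psi>1) * (u + 1 - \<psi>2))"
    using u d1 d2 assms by (simp add: abs_mult)
  also have "\<dots> \<le> s * \<bar>\<psi>1 - \<psi>2\<bar> / (u * u)"
    using d1 d2 u assms by (intro divide_left_mono mult_mono mult_pos_pos) auto
  also have "\<dots> = \<bar>\<psi>1 - \<psi>2\<bar> * (T\<^sup>2 * s powr (1 - 2 * \<beta>))"
    using assms by (simp add: u_def powr_diff powr_add[symmetric] power2_eq_square field_simps)
  finally show ?thesis by (simp add: u_def)
qed

lemma tail_integral_continuous_on:
  assumes "0 < T" "2 < \<beta>" "0 < a"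
  shows "continuous_on {..1} (tail_integral T \<beta> a)"
proof -
  let ?g = "\<lambda>\<psi> s. s / (s powr \<beta> / T + 1 - \<psi>)"
  define C where "C = T\<^sup>2 * (LINT s:{a<..}|lborel. s powr (1 - 2 * \<beta>))"
  have ip: "set_integrable lborel {a<..} (\<lambda>s. s powr (1 - 2 * \<beta>))"
    using assms by (intro set_integrable_powr_Ioi) auto
  have "\<bar>tail_integral T \<beta> a \<psi>1 - tail_integral T \<beta> a \<psi>2\<bar> \<le> \<bar>C\<bar> * \<bar>\<psi>1 - \<psi>2\<bar>"
    if "\<psi>1 \<le> 1" "\<psi>2 \<le> 1" for \<psi>1 \<psi>2
  proof -
    have i1: "set_integrable lborel {a<..} (?g \<psi>1)" and i2: "set_integrable lborel {a<..} (?g \<psi>2)"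
      using assms that by (auto intro!: set_integrable_tail_integrand)
    have "\<bar>tail_integral T \<beta> a \<psi>1 - tail_integral T \<beta> a \<psi>2\<bar>
        = norm (LINT s:{a<..}|lborel. ?g \<psi>1 s - ?g \<psi>2 s)"
      unfolding tail_integral_def using i1 i2 by (simp add: set_integral_diff)
    also have "\<dots> \<le> (LINT s:{a<..}|lborel. norm (?g \<psi>1 s - ?g \<psi>2 s))"
      using i1 i2 by (intro set_integral_norm_bound set_integral_diff)
    also have "\<dots> \<le> (LINT s:{a<..}|lborel. \<bar>\<psi>1 - \<psi>2\<bar> * (T\<^sup>2 * s powr (1 - 2 * \<beta>)))"
      using i1 i2 ip assms that tail_integrand_lipschitz[of T _ \<psi>1 \<psi>2 \<beta>]
      by (intro set_integral_mono set_integrable_norm set_integral_diff set_integrable_mult_right) auto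
    also have "\<dots> = C * \<bar>\<psi>1 - \<psi>2\<bar>"
      by (simp add: C_def)
    also have "\<dots> \<le> \<bar>C\<bar> * \<bar>\<psi>1 - \<psi>2\<bar>"
      by (intro mult_right_mono) auto
    finally show ?thesis .
  qed
  then have "lipschitz_on \<bar>C\<bar> {..1} (tail_integral T \<beta> a)"
    by (intro lipschitz_onI) (auto simp: dist_real_def)
  then show ?thesis
    by (rule lipschitz_on_continuous_on)
qed

lemma emeasure_lborel_ball_complex:
  assumes "0 \<le> a"
  shows "emeasure lborel (ball (c::complex) a) = ennreal (pi * a\<^sup>2)"
    and "emeasure lborel (cball (c::complex) a) = ennreal (pi * a\<^sup>2)"
  using emeasure_ball[OF assms, of c] emeasure_cball[OF assms, of c] unit_ball_vol_even[of 1]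
  by simp_all

lemma distr_lborel_cmod:
  "distr (lborel::complex measure) borel cmod = density lborel (\<lambda>t. ennreal (2 * pi * t * indicator {0..} t))"
proof (rule measure_eqI_generator_eq_countable[where E="range lessThan" and \<Omega>=UNIV
      and A="range (\<lambda>n::nat. {..<real n})"])
  show "Int_stable (range lessThan :: real set set)"
    by (auto simp: Int_stable_def lessThan_Int_lessThan intro: range_eqI[of _ _ "min _ _"])
  have lhs: "emeasure (distr lborel borel cmod) {..<a} = ennreal (if 0 \<le> a then pi * a\<^sup>2 else 0)"
    for a :: real
  proof -
    have "emeasure (distr lborel borel cmod) {..<a} = emeasure lborel (ball (0::complex) a)"
      by (subst emeasure_distr) (auto intro!: arg_cong[where f="emeasure lborel"])
    then show ?thesis
      using emeasure_lborel_ball_complex(1)[of a 0] by (cases "0 \<le> a") (auto simp: ball_empty)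
  qed
  have rhs: "emeasure (density lborel (\<lambda>t. ennreal (2 * pi * t * indicator {0..} t))) {..<a}
      = ennreal (if 0 \<le> a then pi * a\<^sup>2 else 0)" for a :: real
  proof (cases "0 \<le> a")
    case True
    have "((\<lambda>t. 2 * pi * t) has_integral pi * a\<^sup>2 - pi * 0\<^sup>2) {0..a}"
      using True by (intro fundamental_theorem_of_calculus)
        (auto intro!: derivative_eq_intros simp flip: has_real_derivative_iff_has_vector_derivative
          simp: power2_eq_square)
    then have "((\<lambda>t. 2 * pi * t) has_integral pi * a\<^sup>2) {0..<a}"
      by (subst has_integral_spike_set_eq[where T="{0..a}"]) (auto intro: negligible_subset[of "{a}"])
    moreover have "emeasure (density lborel (\<lambda>t. ennreal (2 * pi * t * indicator {0..} t))) {..<a}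
       = (\<integral>\<^sup>+ t. ennreal (2 * pi * t) * indicator {0..<a} t \<partial>lborel)"
      by (subst emeasure_density) (auto intro!: nn_integral_cong simp: indicator_def)
    ultimately show ?thesis
      using True nn_integral_has_integral_lebesgue'[of "{0..<a}" "\<lambda>t. 2 * pi * t"] by simp
  qed (auto simp: emeasure_density intro!: nn_integral_zero' split: split_indicator)
  show "emeasure (distr lborel borel cmod) X
      = emeasure (density lborel (\<lambda>t. ennreal (2 * pi * t * indicator {0..} t))) X"
    if "X \<in> range lessThan" for X
    using that lhs rhs by auto
  show "emeasure (distr lborel borel cmod) X \<noteq> \<infinity>" if "X \<in> range (\<lambda>n::nat. {..<real n})" for X
    using that lhs by auto
qed (auto simp: borel_Iio intro: reals_Archimedean2)

lemma integral_lborel_cmod: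
  fixes g :: "real \<Rightarrow> real"
  assumes [measurable]: "g \<in> borel_measurable borel"
  shows "(\<integral>y. g (cmod y) \<partial>(lborel::complex measure)) = (\<integral>t. (2 * pi * t * indicator {0..} t) * g t \<partial>lborel)"
proof -
  have "(\<integral>y. g (cmod y) \<partial>(lborel::complex measure)) = integral\<^sup>L (distr lborel borel cmod) g"
    by (subst integral_distr) auto
  also have "\<dots> = (\<integral>t. (2 * pi * t * indicator {0..} t) *\<^sub>R g t \<partial>lborel)"
    unfolding distr_lborel_cmod by (subst integral_density) (auto simp: indicator_def)
  finally show ?thesis by simp
qed

lemma set_integral_compl_cball_bval:
  fixes lam T r \<beta> x \<psi> :: real
  assumes "0 < T" "0 < r" "0 < x" "\<psi> \<le> 1"
  shows "(LINT y:-cball 0 x|lborel. lam / (1 + bval T r \<beta> y - \<psi>))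
       = 2 * pi * lam * r\<^sup>2 * tail_integral T \<beta> (x / r) \<psi>"
proof -
  define G where "G t = indicator {x<..} t * (lam / (1 + t powr \<beta> / (T * r powr \<beta>) - \<psi>))" for t
  have [measurable]: "G \<in> borel_measurable borel" unfolding G_def by measurable
  have radial: "2 * pi * (r * s) * indicator {0..} (r * s) * G (r * s)
      = 2 * pi * lam * r * (indicator {x/r<..} s *\<^sub>R (s / (s powr \<beta> / T + 1 - \<psi>)))" for s
  proof (cases "x / r < s")
    case True
    have "0 < x / r" using assms by simp
    then have "0 < s" using True by linarith
    have "x < r * s" using True assms by (simp add: field_simps)
    moreover have "(r * s) powr \<beta> / (T * r powr \<beta>) = s powr \<beta> / T"
      using assms \<open>0 < s\<close> by (simp add: powr_mult)
    ultimately show ?thesis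
      using True \<open>0 < s\<close> assms by (simp add: G_def add.commute)
  next
    case False
    then show ?thesis using assms by (simp add: G_def field_simps)
  qed
  have "(LINT y:-cball 0 x|lborel. lam / (1 + bval T r \<beta> y - \<psi>)) = (\<integral>y. G (cmod y) \<partial>lborel)"
    unfolding set_lebesgue_integral_def G_def bval_def
    by (intro Bochner_Integration.integral_cong) (auto simp: indicator_def)
  also have "\<dots> = (\<integral>t. (2 * pi * t * indicator {0..} t) * G t \<partial>lborel)"
    by (rule integral_lborel_cmod) measurable
  also have "\<dots> = r * (\<integral>s. 2 * pi * (r * s) * indicator {0..} (r * s) * G (r * s) \<partial>lborel)"
    using lborel_integral_real_affine[of r "\<lambda>t. 2 * pi * t * indicator {0..} t * G t" 0] assms
    by simp
  also have "\<dots> = 2 * pi * lam * r\<^sup>2 * tail_integral T \<beta> (x / r) \<psi>"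
    unfolding radial tail_integral_def set_lebesgue_integral_def
    by (subst integral_mult_right_zero) (simp add: power2_eq_square)
  finally show ?thesis .
qed

lemma I_fun_eq_tail_integral:
  "I_fun lam T r \<beta> \<rho> x = \<rho> * (2 * pi * lam * r\<^sup>2 * tail_integral T \<beta> (x / r) \<rho>)"
proof -
  have "(LINT s:{x / r<..}|lborel. \<rho> * s / (s powr \<beta> / T + 1 - \<rho>)) = \<rho> * tail_integral T \<beta> (x / r) \<rho>"
    unfolding tail_integral_def by (simp flip: set_integral_mult_right)
  then show ?thesis unfolding I_fun_def by simp
qed

section \<open>The optimal MAP when a single receiver lies in the disc\<close>

lemma fixpoint_threshold:
  fixes b :: real and J :: "real \<Rightarrow> real"
  assumes b: "0 < b"
    and J_cont: "continuous_on {0..1} J"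
    and J_nonneg: "\<And>x. 0 \<le> x \<Longrightarrow> x \<le> 1 \<Longrightarrow> 0 \<le> J x"
    and J_mono: "\<And>x y. 0 \<le> x \<Longrightarrow> x \<le> y \<Longrightarrow> y \<le> 1 \<Longrightarrow> J x \<le> J y"
  defines "\<Psi> \<equiv> (if 1 / b + J 1 > 1
                 then (THE \<psi>. 0 < \<psi> \<and> \<psi> < 1 \<and> 1 / \<psi> = 1 / (1 + b - \<psi>) + J \<psi>)
                 else 1)"
  shows "\<And>\<rho>. 0 \<le> \<rho> \<Longrightarrow> \<rho> < 1 \<Longrightarrow> \<rho> < \<Psi> \<longleftrightarrow> \<rho> / (b + 1 - \<rho>) + \<rho> * J \<rho> < 1"
    and "\<Psi> = 1 \<longleftrightarrow> 1 / b + J 1 \<le> 1"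
proof -
  define h where "h \<psi> = \<psi> / (b + 1 - \<psi>) + \<psi> * J \<psi>" for \<psi>
  have h_less: "h x < h y" if "0 \<le> x" "x < y" "y \<le> 1" for x y
  proof -
    have "x / (b + 1 - x) < y / (b + 1 - y)"
      using that b by (simp add: field_simps) (use mult_strict_left_mono[OF \<open>x < y\<close> b] in linarith)
    moreover have "x * J x \<le> y * J y"
      using that J_nonneg[of x] J_mono[of x y] by (intro mult_mono) auto
    ultimately show ?thesis by (simp add: h_def)
  qed
  have h1: "h 1 = 1 / b + J 1" by (simp add: h_def)
  have fixpoint_iff: "1 / \<psi> = 1 / (1 + b - \<psi>) + J \<psi> \<longleftrightarrow> h \<psi> = 1" if "0 < \<psi>" for \<psi>
    using that by (auto simp: h_def field_simps)
  have "(\<forall>\<rho>. 0 \<le> \<rho> \<longrightarrow> \<rho> < 1 \<longrightarrow> \<rho> < \<Psi> \<longleftrightarrow> h \<rho> < 1) \<and> (\<Psi> = 1 \<longleftrightarrow> h 1 \<le> 1)"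
  proof (cases "h 1 > 1")
    case True
    have "continuous_on {0..1} h"
      unfolding h_def using b by (intro continuous_intros J_cont) auto
    then obtain p where p: "0 \<le> p" "p \<le> 1" "h p = 1"
      using IVT'[of h 0 1 1] True by (auto simp: h_def)
    have "p \<noteq> 0" "p \<noteq> 1" using p True by (auto simp: h_def)
    with p have p': "0 < p" "p < 1" by auto
    have unique: "q = p" if "0 < q" "q < 1" "h q = 1" for q
      using h_less[of q p] h_less[of p q] that p p' by (cases q p rule: linorder_cases) auto
    have "(THE \<psi>. 0 < \<psi> \<and> \<psi> < 1 \<and> 1 / \<psi> = 1 / (1 + b - \<psi>) + J \<psi>) = p"
    proof (rule the_equality)
      show "0 < p \<and> p < 1 \<and> 1 / p = 1 / (1 + b - p) + J p"
        using p' p(3) fixpoint_iff[OF p'(1)] by simp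
      show "q = p" if "0 < q \<and> q < 1 \<and> 1 / q = 1 / (1 + b - q) + J q" for q
        using that unique fixpoint_iff by blast
    qed
    then have "\<Psi> = p"
      unfolding \<Psi>_def using True h1 by simp
    moreover have "\<rho> < p \<longleftrightarrow> h \<rho> < 1" if "0 \<le> \<rho>" "\<rho> < 1" for \<rho>
      using h_less[of \<rho> p] h_less[of p \<rho>] that p by (cases \<rho> p rule: linorder_cases) auto
    ultimately show "(\<forall>\<rho>. 0 \<le> \<rho> \<longrightarrow> \<rho> < 1 \<longrightarrow> \<rho> < \<Psi> \<longleftrightarrow> h \<rho> < 1) \<and> (\<Psi> = 1 \<longleftrightarrow> h 1 \<le> 1)"
      using True p' by auto
  next
    case False
    then show "(\<forall>\<rho>. 0 \<le> \<rho> \<longrightarrow> \<rho> < 1 \<longrightarrow> \<rho> < \<Psi> \<longleftrightarrow> h \<rho> < 1) \<and> (\<Psi> = 1 \<longleftrightarrow> h 1 \<le> 1)"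
      unfolding \<Psi>_def using h1 h_less[of _ 1] by force
  qed
  then show "\<And>\<rho>. 0 \<le> \<rho> \<Longrightarrow> \<rho> < 1 \<Longrightarrow> \<rho> < \<Psi> \<longleftrightarrow> \<rho> / (b + 1 - \<rho>) + \<rho> * J \<rho> < 1"
    and "\<Psi> = 1 \<longleftrightarrow> 1 / b + J 1 \<le> 1"
    by (auto simp: h_def)
qed

definition xi_criterion :: "real \<Rightarrow> real \<Rightarrow> real \<Rightarrow> real \<Rightarrow> real \<Rightarrow> real \<Rightarrow> real" where
  "xi_criterion lam T r \<beta> \<rho> x = \<rho> / (x powr \<beta> / (T * r powr \<beta>) + 1 - \<rho>) + I_fun lam T r \<beta> \<rho> x"

lemma xi_eq_Inf_xi_criterion:
  "xi lam T r \<beta> \<rho> = Inf {x. 0 < x \<and> xi_criterion lam T r \<beta> \<rho> x < 1}"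
  unfolding xi_def xi_criterion_def ..

lemma opt_MAP_single_receiver:
  fixes lam T r \<beta> x :: real
  assumes lam: "0 < lam" and T: "0 < T" and r: "0 < r" and \<beta>: "2 < \<beta>" and x: "0 < x"
    and Ys: "Ys \<inter> cball 0 x = {y0}" and y0: "cmod y0 = x"
  shows "\<And>\<rho>. 0 \<le> \<rho> \<Longrightarrow> \<rho> < 1 \<Longrightarrow>
           \<rho> < opt_MAP lam T r \<beta> Ys (cball 0 x) \<longleftrightarrow> xi_criterion lam T r \<beta> \<rho> x < 1"
    and "opt_MAP lam T r \<beta> Ys (cball 0 x) = 1 \<longleftrightarrow> xi_criterion lam T r \<beta> 1 x \<le> 1"
proof -
  define b where "b = x powr \<beta> / (T * r powr \<beta>)"
  define J where "J \<psi> = 2 * pi * lam * r\<^sup>2 * tail_integral T \<beta> (x / r) \<psi>" for \<psi>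
  have b: "0 < b" using T r x by (simp add: b_def)
  have xr: "0 < x / r" using x r by simp
  have bval_y0: "bval T r \<beta> y0 = b" unfolding bval_def b_def using y0 by simp
  have outside: "(LINT y:-cball 0 x|lborel. lam / (1 + bval T r \<beta> y - \<psi>)) = J \<psi>" if "\<psi> \<le> 1" for \<psi>
    unfolding J_def using set_integral_compl_cball_bval[OF T r x that] .
  have "(\<Sum>y\<in>Ys \<inter> cball 0 x. 1 / bval T r \<beta> y) + (LINT y:-cball 0 x|lborel. lam / bval T r \<beta> y)
      = 1 / b + J 1"
    using outside[of 1] by (simp add: Ys bval_y0)
  moreover have "0 < \<psi> \<and> \<psi> < 1 \<and> 1 / \<psi> = (\<Sum>y\<in>Ys \<inter> cball 0 x. 1 / (1 + bval T r \<beta> y - \<psi>))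
        + (LINT y:-cball 0 x|lborel. lam / (1 + bval T r \<beta> y - \<psi>))
      \<longleftrightarrow> 0 < \<psi> \<and> \<psi> < 1 \<and> 1 / \<psi> = 1 / (1 + b - \<psi>) + J \<psi>" for \<psi>
    using outside[of \<psi>] by (auto simp: Ys bval_y0)
  ultimately have "opt_MAP lam T r \<beta> Ys (cball 0 x) =
      (if 1 / b + J 1 > 1 then (THE \<psi>. 0 < \<psi> \<and> \<psi> < 1 \<and> 1 / \<psi> = 1 / (1 + b - \<psi>) + J \<psi>) else 1)"
    unfolding opt_MAP_def by presburger
  moreover have "continuous_on {0..1} J"
    unfolding J_def using tail_integral_continuous_on[OF T \<beta> xr]
    by (intro continuous_on_mult_left) (auto elim: continuous_on_subset)
  moreover have "0 \<le> J \<psi>" if "0 \<le> \<psi>" "\<psi> \<le> 1" for \<psi>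
    unfolding J_def using tail_integral_nonneg[of T "x / r" \<psi> \<beta>] that T xr lam by simp
  moreover have "J \<psi>1 \<le> J \<psi>2" if "0 \<le> \<psi>1" "\<psi>1 \<le> \<psi>2" "\<psi>2 \<le> 1" for \<psi>1 \<psi>2
    unfolding J_def using tail_integral_mono[OF T \<beta> xr, of \<psi>1 \<psi>2] that lam
    by (intro mult_left_mono) auto
  moreover have "xi_criterion lam T r \<beta> \<rho> x = \<rho> / (b + 1 - \<rho>) + \<rho> * J \<rho>" for \<rho>
    unfolding xi_criterion_def I_fun_eq_tail_integral b_def J_def ..
  ultimately show "\<And>\<rho>. 0 \<le> \<rho> \<Longrightarrow> \<rho> < 1 \<Longrightarrow>
           \<rho> < opt_MAP lam T r \<beta> Ys (cball 0 x) \<longleftrightarrow> xi_criterion lam T r \<beta> \<rho> x < 1"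
    and "opt_MAP lam T r \<beta> Ys (cball 0 x) = 1 \<longleftrightarrow> xi_criterion lam T r \<beta> 1 x \<le> 1"
    using fixpoint_threshold[OF b, of J] by simp_all
qed

lemma xi_criterion_antimono:
  fixes lam T r \<beta> \<rho> :: real
  assumes "0 < lam" "0 < T" "0 < r" "2 < \<beta>" "0 \<le> \<rho>" "\<rho> \<le> 1" "0 < x1"
  shows "x1 \<le> x2 \<Longrightarrow> xi_criterion lam T r \<beta> \<rho> x2 \<le> xi_criterion lam T r \<beta> \<rho> x1"
    and "0 < \<rho> \<Longrightarrow> x1 < x2 \<Longrightarrow> xi_criterion lam T r \<beta> \<rho> x2 < xi_criterion lam T r \<beta> \<rho> x1"
proof -
  define b where "b x = x powr \<beta> / (T * r powr \<beta>)" for x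
  have b_less: "0 < b x1 \<and> b x1 < b x2" if "x1 < x2"
    using assms that by (simp add: b_def divide_strict_right_mono powr_less_mono2)
  have I_le: "I_fun lam T r \<beta> \<rho> x2 \<le> I_fun lam T r \<beta> \<rho> x1" if "x1 \<le> x2"
    unfolding I_fun_eq_tail_integral using assms that tail_integral_antimono[of T \<beta> "x1 / r" "x2 / r" \<rho>]
    by (intro mult_left_mono) (auto simp: divide_right_mono)
  have crit: "xi_criterion lam T r \<beta> \<rho> x = \<rho> / (b x + 1 - \<rho>) + I_fun lam T r \<beta> \<rho> x" for x
    by (simp add: xi_criterion_def b_def)
  show "xi_criterion lam T r \<beta> \<rho> x2 \<le> xi_criterion lam T r \<beta> \<rho> x1" if "x1 \<le> x2"
  proof (cases "x1 = x2")
    case False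
    then have "\<rho> / (b x2 + 1 - \<rho>) \<le> \<rho> / (b x1 + 1 - \<rho>)"
      using b_less that assms by (intro divide_left_mono mult_pos_pos) auto
    then show ?thesis unfolding crit using I_le[OF that] by simp
  qed simp
  show "xi_criterion lam T r \<beta> \<rho> x2 < xi_criterion lam T r \<beta> \<rho> x1" if "0 < \<rho>" "x1 < x2"
  proof -
    have "\<rho> / (b x2 + 1 - \<rho>) < \<rho> / (b x1 + 1 - \<rho>)"
      using b_less that assms by (intro divide_strict_left_mono mult_pos_pos) auto
    then show ?thesis unfolding crit using I_le that by simp
  qed
qed

lemma xi_criterion_eventually_less_1:
  fixes lam T r \<beta> \<rho> :: real
  assumes lam: "0 < lam" and T: "0 < T" and r: "0 < r" and \<beta>: "2 < \<beta>" and \<rho>: "0 \<le> \<rho>" "\<rho> \<le> 1"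
  shows "\<exists>x>0. xi_criterion lam T r \<beta> \<rho> x < 1"
proof -
  define C where "C = 2 * pi * lam * r\<^sup>2 * T / (\<beta> - 2)"
  have bound: "xi_criterion lam T r \<beta> \<rho> x \<le> T * r powr \<beta> * x powr (- \<beta>) + C * (x / r) powr (2 - \<beta>)"
    if x: "0 < x" for x
  proof -
    define b where "b = x powr \<beta> / (T * r powr \<beta>)"
    have b: "0 < b" using T r x by (simp add: b_def)
    have "\<rho> * b \<le> b + 1 - \<rho>"
      using b \<rho> mult_left_le_one_le[of b \<rho>] by linarith
    then have "\<rho> / (b + 1 - \<rho>) \<le> 1 / b"
      using b \<rho> by (simp add: divide_simps)
    also have "\<dots> = T * r powr \<beta> * x powr (- \<beta>)"
      using x by (simp add: b_def powr_minus field_simps)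
    finally have near: "\<rho> / (b + 1 - \<rho>) \<le> T * r powr \<beta> * x powr (- \<beta>)" .
    have "I_fun lam T r \<beta> \<rho> x \<le> 2 * pi * lam * r\<^sup>2 * tail_integral T \<beta> (x / r) \<rho>"
      unfolding I_fun_eq_tail_integral using tail_integral_nonneg[of T "x / r" \<rho> \<beta>] lam T r x \<rho>
      by (intro mult_left_le_one_le) auto
    also have "\<dots> \<le> 2 * pi * lam * r\<^sup>2 * (T * (x / r) powr (2 - \<beta>) / (\<beta> - 2))"
      using tail_integral_le[of T \<beta> "x / r" \<rho>] lam T r \<beta> x \<rho> by (intro mult_left_mono) auto
    also have "\<dots> = C * (x / r) powr (2 - \<beta>)"
      by (simp add: C_def)
    finally show ?thesis
      using near by (simp add: xi_criterion_def b_def)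
  qed
  have "((\<lambda>x. T * r powr \<beta> * x powr (- \<beta>) + C * (x / r) powr (2 - \<beta>)) \<longlongrightarrow> 0) at_top"
    using r \<beta> by real_asymp
  then have "\<forall>\<^sub>F x in at_top. 0 < x \<and> T * r powr \<beta> * x powr (- \<beta>) + C * (x / r) powr (2 - \<beta>) < 1"
    using order_tendstoD(2)[OF _ zero_less_one] by (intro eventually_conj eventually_gt_at_top) auto
  then obtain x where "0 < x" "T * r powr \<beta> * x powr (- \<beta>) + C * (x / r) powr (2 - \<beta>) < 1"
    by (auto dest: eventually_happens)
  then show ?thesis using bound[of x] by auto
qed

lemma Inf_sublevel_antimono:
  fixes F :: "real \<Rightarrow> real"
  assumes antimono: "\<And>x y. 0 < x \<Longrightarrow> x \<le> y \<Longrightarrow> F y \<le> F x" and ex: "\<exists>x>0. F x < 1"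
  defines "\<xi> \<equiv> Inf {x. 0 < x \<and> F x < 1}"
  shows "0 \<le> \<xi>" and "\<And>x. \<xi> < x \<Longrightarrow> 0 < x \<and> F x < 1" and "\<And>x. 0 < x \<Longrightarrow> F x < 1 \<Longrightarrow> \<xi> \<le> x"
    and "\<And>x. (\<And>x y. 0 < x \<Longrightarrow> x < y \<Longrightarrow> F y < F x) \<Longrightarrow> 0 < x \<Longrightarrow> F x \<le> 1 \<Longrightarrow> \<xi> \<le> x"
proof -
  let ?W = "{x. 0 < x \<and> F x < 1}"
  have ne: "?W \<noteq> {}" using ex by auto
  have bdd: "bdd_below ?W" by (rule bdd_belowI[of _ 0]) auto
  show "0 \<le> \<xi>" unfolding \<xi>_def using ne by (intro cInf_greatest) auto
  show le: "\<xi> \<le> x" if "0 < x" "F x < 1" for x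
    unfolding \<xi>_def using that bdd by (intro cInf_lower) auto
  show "0 < x \<and> F x < 1" if "\<xi> < x" for x
  proof -
    obtain u where "0 < u" "F u < 1" "u < x"
      using \<open>\<xi> < x\<close> cInf_less_iff[OF ne bdd] unfolding \<xi>_def by auto
    then show ?thesis using antimono[of u x] by auto
  qed
  show "\<xi> \<le> x" if strict: "\<And>x y. 0 < x \<Longrightarrow> x < y \<Longrightarrow> F y < F x" and "0 < x" "F x \<le> 1" for x
  proof (rule ccontr)
    assume "\<not> \<xi> \<le> x"
    then have "x < (x + \<xi>) / 2" "(x + \<xi>) / 2 < \<xi>" by auto
    moreover from this have "F ((x + \<xi>) / 2) < 1" using strict[of x] that by fastforce
    ultimately show False using le[of "(x + \<xi>) / 2"] \<open>0 < x\<close> by auto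
  qed
qed

section \<open>Poisson point processes\<close>

lemma poisson_pp_prob_space: "poisson_pp M mu N \<Longrightarrow> prob_space M"
  by (simp add: poisson_pp_def)

lemma
  assumes "poisson_pp M mu N" "A \<in> sets mu" "emeasure mu A < \<infinity>"
  shows poisson_pp_count_sets: "{\<omega>\<in>space M. finite (N \<omega> \<inter> A) \<and> card (N \<omega> \<inter> A) = k} \<in> sets M"
    and poisson_pp_count: "measure M {\<omega>\<in>space M. finite (N \<omega> \<inter> A) \<and> card (N \<omega> \<inter> A) = k}
      = measure mu A ^ k / fact k * exp (- measure mu A)"
  using assms unfolding poisson_pp_def by auto

lemma
  assumes "poisson_pp M mu N" "A \<in> sets mu" "emeasure mu A < \<infinity>"
  shows poisson_pp_void_sets: "{\<omega>\<in>space M. N \<omega> \<inter> A = {}} \<in> sets M"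
    and poisson_pp_void: "measure M {\<omega>\<in>space M. N \<omega> \<inter> A = {}} = exp (- measure mu A)"
proof -
  have "{\<omega>\<in>space M. N \<omega> \<inter> A = {}} = {\<omega>\<in>space M. finite (N \<omega> \<inter> A) \<and> card (N \<omega> \<inter> A) = 0}"
    by auto
  then show "{\<omega>\<in>space M. N \<omega> \<inter> A = {}} \<in> sets M"
    and "measure M {\<omega>\<in>space M. N \<omega> \<inter> A = {}} = exp (- measure mu A)"
    using poisson_pp_count_sets[OF assms] poisson_pp_count[OF assms, of 0] by simp_all
qed

lemma poisson_pp_null_infinite:
  assumes "poisson_pp M mu N" "A \<in> sets mu" "emeasure mu A < \<infinity>"
  shows "{\<omega>\<in>space M. infinite (N \<omega> \<inter> A)} \<in> null_sets M"
proof -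
  interpret prob_space M using poisson_pp_prob_space[OF assms(1)] .
  define E where "E k = {\<omega>\<in>space M. finite (N \<omega> \<inter> A) \<and> card (N \<omega> \<inter> A) = k}" for k
  define m where "m = measure mu A"
  have E: "E k \<in> sets M" for k
    unfolding E_def using poisson_pp_count_sets[OF assms] .
  have "(\<lambda>k. measure M (E k)) sums measure M (\<Union>k. E k)"
    using E by (intro finite_measure_UNION) (auto simp: disjoint_family_on_def E_def)
  moreover have "(\<lambda>k. measure M (E k)) = (\<lambda>k. m ^ k /\<^sub>R fact k * exp (- m))"
    using poisson_pp_count[OF assms] by (simp add: E_def m_def divide_inverse_commute)
  moreover have "(\<lambda>k. m ^ k /\<^sub>R fact k * exp (- m)) sums (exp m * exp (- m))"
    by (intro sums_mult2 exp_converges)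
  ultimately have "prob (\<Union>k. E k) = 1"
    by (metis sums_unique2 exp_minus_inverse)
  moreover have "(\<Union>k. E k) \<in> sets M" using E by auto
  ultimately have "space M - (\<Union>k. E k) \<in> null_sets M"
    by (simp add: null_sets_def emeasure_eq_measure prob_compl)
  moreover have "{\<omega>\<in>space M. infinite (N \<omega> \<inter> A)} = space M - (\<Union>k. E k)"
    by (auto simp: E_def)
  ultimately show ?thesis by simp
qed

lemma poisson_pp_at_least_two:
  assumes "poisson_pp M mu N" "A \<in> sets mu" "emeasure mu A < \<infinity>"
  shows "{\<omega>\<in>space M. \<not> (finite (N \<omega> \<inter> A) \<and> card (N \<omega> \<inter> A) \<le> 1)} \<in> sets M"
    and "measure M {\<omega>\<in>space M. \<not> (finite (N \<omega> \<inter> A) \<and> card (N \<omega> \<inter> A) \<le> 1)} \<le> (measure mu A)\<^sup>2"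
proof -
  interpret prob_space M using poisson_pp_prob_space[OF assms(1)] .
  define E where "E k = {\<omega>\<in>space M. finite (N \<omega> \<inter> A) \<and> card (N \<omega> \<inter> A) = k}" for k
  define m where "m = measure mu A"
  have E: "E k \<in> sets M" "prob (E k) = m ^ k / fact k * exp (- m)" for k
    unfolding E_def m_def using poisson_pp_count_sets[OF assms] poisson_pp_count[OF assms] by auto
  have split: "{\<omega>\<in>space M. \<not> (finite (N \<omega> \<inter> A) \<and> card (N \<omega> \<inter> A) \<le> 1)} = space M - (E 0 \<union> E 1)"
    by (auto simp: E_def le_Suc_eq)
  show "{\<omega>\<in>space M. \<not> (finite (N \<omega> \<inter> A) \<and> card (N \<omega> \<inter> A) \<le> 1)} \<in> sets M"
    unfolding split using E by auto
  have "prob (E 0 \<union> E 1) = exp (- m) + m * exp (- m)"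
    using E by (subst finite_measure_Union) (auto simp: E_def)
  then have "prob (space M - (E 0 \<union> E 1)) = 1 - (1 + m) * exp (- m)"
    using E by (subst prob_compl) (auto simp: algebra_simps)
  also have "\<dots> \<le> m\<^sup>2"
    \<comment> \<open>from \<open>1 - m \<le> exp (- m)\<close>\<close>
    using mult_right_mono[OF exp_ge_add_one_self[of "- m"], of "1 + m"]
    by (simp add: m_def algebra_simps power2_eq_square)
  finally show "prob {\<omega>\<in>space M. \<not> (finite (N \<omega> \<inter> A) \<and> card (N \<omega> \<inter> A) \<le> 1)} \<le> (measure mu A)\<^sup>2"
    unfolding split by (simp add: m_def)
qed

lemma measure_completion_squeeze:
  assumes "prob_space M" and B: "B1 \<in> sets M" "B2 \<in> sets M" "B1 \<subseteq> B2" and Z: "Z \<in> null_sets M"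
    and S: "S \<subseteq> space M" "B1 - Z \<subseteq> S" "S - Z \<subseteq> B2"
    and measure_B: "measure M B1 = p" "measure M B2 = p"
  shows "measure (completion M) S = p"
proof -
  interpret prob_space M by fact
  have "measure M (B2 - B1) = 0" using finite_measure_Diff[OF B(2,1,3)] measure_B by simp
  then have "B2 - B1 \<in> null_sets M" using B(1,2) by (simp add: null_sets_def emeasure_eq_measure)
  moreover have "S - (B1 - Z) \<subseteq> (B2 - B1) \<union> Z" using S by blast
  ultimately have "S - (B1 - Z) \<in> null_sets (completion M)"
    using Z by (meson null_sets_completion_subset null_sets_completionI null_sets.Un)
  moreover have "S = (B1 - Z) \<union> (S - (B1 - Z))" using S by blast
  ultimately have "measure (completion M) S = measure (completion M) (B1 - Z)"
    using B(1) Z by (metis measure_Un_null_set sets.Diff sets_completionI_sets null_setsD2)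
  also have "\<dots> = measure M (B1 - Z)" using B Z by (intro measure_completion) auto
  also have "\<dots> = p" using measure_Diff_null_set[OF B(1) Z] measure_B by simp
  finally show ?thesis .
qed

section \<open>The nearest point of a Poisson process with quadratic distance intensity\<close>

locale poisson_radial =
  fixes M :: "'w measure" and mu :: "'a measure" and N :: "'w \<Rightarrow> 'a set"
    and D :: "'a \<Rightarrow> real" and c :: real
  assumes poisson: "poisson_pp M mu N"
    and c_pos: "0 < c"
    and D_nonneg: "\<And>p. 0 \<le> D p"
    and sets_le: "\<And>a. {p. D p \<le> a} \<in> sets mu" and sets_less: "\<And>a. {p. D p < a} \<in> sets mu"
    and emeasure_le: "\<And>a. 0 \<le> a \<Longrightarrow> emeasure mu {p. D p \<le> a} = ennreal (c * a\<^sup>2)"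
    and emeasure_less: "\<And>a. 0 \<le> a \<Longrightarrow> emeasure mu {p. D p < a} = ennreal (c * a\<^sup>2)"
begin

sublocale prob_space M
  using poisson by (rule poisson_pp_prob_space)

lemma
  assumes "0 \<le> a"
  shows void_le_sets: "{\<omega>\<in>space M. N \<omega> \<inter> {p. D p \<le> a} = {}} \<in> sets M"
    and prob_void_le: "prob {\<omega>\<in>space M. N \<omega> \<inter> {p. D p \<le> a} = {}} = exp (- c * a\<^sup>2)"
    and void_less_sets: "{\<omega>\<in>space M. N \<omega> \<inter> {p. D p < a} = {}} \<in> sets M"
    and prob_void_less: "prob {\<omega>\<in>space M. N \<omega> \<inter> {p. D p < a} = {}} = exp (- c * a\<^sup>2)"
  using poisson_pp_void_sets[OF poisson sets_le] poisson_pp_void[OF poisson sets_le]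
    poisson_pp_void_sets[OF poisson sets_less] poisson_pp_void[OF poisson sets_less]
    emeasure_le[OF assms] emeasure_less[OF assms] c_pos assms
  by (simp_all add: measure_def)

lemma null_infinite: "0 \<le> a \<Longrightarrow> {\<omega>\<in>space M. infinite (N \<omega> \<inter> {p. D p \<le> a})} \<in> null_sets M"
  using emeasure_le by (intro poisson_pp_null_infinite[OF poisson sets_le]) auto

lemma null_point_at_zero: "{\<omega>\<in>space M. N \<omega> \<inter> {p. D p \<le> 0} \<noteq> {}} \<in> null_sets M"
proof -
  have "{\<omega>\<in>space M. N \<omega> \<inter> {p. D p \<le> 0} \<noteq> {}} = space M - {\<omega>\<in>space M. N \<omega> \<inter> {p. D p \<le> 0} = {}}"
    by auto
  then show ?thesis
    using void_le_sets[of 0] prob_void_le[of 0]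
    by (simp add: null_sets_def emeasure_eq_measure prob_compl)
qed

lemma null_no_point: "(\<Inter>n. {\<omega>\<in>space M. N \<omega> \<inter> {p. D p \<le> real n} = {}}) \<in> null_sets M"
proof -
  let ?E = "\<lambda>n::nat. {\<omega>\<in>space M. N \<omega> \<inter> {p. D p \<le> real n} = {}}"
  have "prob (\<Inter>n. ?E n) \<le> exp (- c * (real n)\<^sup>2)" for n
    using void_le_sets prob_void_le[of "real n"] finite_measure_mono[of "\<Inter>n. ?E n" "?E n"] by auto
  moreover have "(\<lambda>n. exp (- c * (real n)\<^sup>2)) \<longlonglongrightarrow> 0"
    using c_pos by real_asymp
  ultimately have "prob (\<Inter>n. ?E n) \<le> 0"
    by (intro tendsto_lowerbound[where F=sequentially]) (auto intro: always_eventually)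
  then show ?thesis
    using void_le_sets by (auto simp: null_sets_def emeasure_eq_measure intro: antisym)
qed

lemma measure_shell:
  assumes "0 \<le> a" "a \<le> b"
  shows "{p. a \<le> D p \<and> D p < b} \<in> sets mu" "emeasure mu {p. a \<le> D p \<and> D p < b} < \<infinity>"
    and "measure mu {p. a \<le> D p \<and> D p < b} = c * (b\<^sup>2 - a\<^sup>2)"
proof -
  have eq: "{p. a \<le> D p \<and> D p < b} = {p. D p < b} - {p. D p < a}" by auto
  have fin: "emeasure mu {p. D p < b} < \<infinity>" using emeasure_less[of b] assms by simp
  show "{p. a \<le> D p \<and> D p < b} \<in> sets mu" unfolding eq using sets_less by auto
  show "emeasure mu {p. a \<le> D p \<and> D p < b} < \<infinity>"
    unfolding eq using sets_less fin by (auto intro: le_less_trans[OF emeasure_mono])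
  have "measure mu {p. a \<le> D p \<and> D p < b} = measure mu {p. D p < b} - measure mu {p. D p < a}"
    unfolding eq using sets_less fin assms by (intro measure_Diff) auto
  then show "measure mu {p. a \<le> D p \<and> D p < b} = c * (b\<^sup>2 - a\<^sup>2)"
    using emeasure_less assms c_pos by (simp add: measure_def algebra_simps)
qed

text \<open>Two points at equal distance \<open>\<le> n\<close> lie in one of the \<open>n m + 1\<close> shells of width \<open>1/m\<close>, and each
  shell holds two points with probability \<open>O(1/m\<^sup>2)\<close>; so ties have probability \<open>O(1/m)\<close> for every \<open>m\<close>.\<close>

definition crowded_shells :: "nat \<Rightarrow> nat \<Rightarrow> 'w set" where
  "crowded_shells n m = (\<Union>k\<le>n * m. {\<omega>\<in>space M.
      \<not> (finite (N \<omega> \<inter> {p. real k / m \<le> D p \<and> D p < (real k + 1) / m})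
         \<and> card (N \<omega> \<inter> {p. real k / m \<le> D p \<and> D p < (real k + 1) / m}) \<le> 1)})"

lemma grid_shell:
  assumes "0 < m"
  shows "{p. real k / m \<le> D p \<and> D p < (real k + 1) / m} \<in> sets mu"
    and "emeasure mu {p. real k / m \<le> D p \<and> D p < (real k + 1) / m} < \<infinity>"
    and "measure mu {p. real k / m \<le> D p \<and> D p < (real k + 1) / m} = c * (2 * real k + 1) / (real m)\<^sup>2"
proof -
  have "0 \<le> real k / m" "real k / m \<le> (real k + 1) / m"
    using assms by (auto simp: divide_right_mono)
  note sh = measure_shell[OF this]
  show "{p. real k / m \<le> D p \<and> D p < (real k + 1) / m} \<in> sets mu"
    and "emeasure mu {p. real k / m \<le> D p \<and> D p < (real k + 1) / m} < \<infinity>"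
    using sh(1,2) .
  show "measure mu {p. real k / m \<le> D p \<and> D p < (real k + 1) / m} = c * (2 * real k + 1) / (real m)\<^sup>2"
    unfolding sh(3) using assms by (simp add: field_simps power2_eq_square)
qed

lemma crowded_shells_sets: "0 < m \<Longrightarrow> crowded_shells n m \<in> sets M"
  unfolding crowded_shells_def
  using poisson_pp_at_least_two(1)[OF poisson grid_shell(1,2)] by auto

lemma prob_crowded_shells_le:
  assumes m: "0 < m"
  shows "prob (crowded_shells n m) \<le> (real n + 1) * (c * (2 * real n + 1))\<^sup>2 / real m"
proof -
  define E where "E k = {\<omega>\<in>space M.
      \<not> (finite (N \<omega> \<inter> {p. real k / m \<le> D p \<and> D p < (real k + 1) / m})
         \<and> card (N \<omega> \<inter> {p. real k / m \<le> D p \<and> D p < (real k + 1) / m}) \<le> 1)}" for k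
  have E_sets: "E k \<in> sets M" for k
    unfolding E_def using poisson_pp_at_least_two(1)[OF poisson grid_shell(1,2)[OF m]] .
  have prob_E: "prob (E k) \<le> (c * ((2 * real n + 1) / real m))\<^sup>2" if "k \<le> n * m" for k
  proof -
    have "prob (E k) \<le> (c * (2 * real k + 1) / (real m)\<^sup>2)\<^sup>2"
      unfolding E_def using poisson_pp_at_least_two(2)[OF poisson grid_shell(1,2)[OF m]] grid_shell(3)[OF m]
      by simp
    also have "\<dots> \<le> (c * ((2 * real n + 1) / real m))\<^sup>2"
    proof -
      have "real k \<le> real n * real m" "1 \<le> real m"
        using that m by (simp_all flip: of_nat_mult)
      then have "2 * real k + 1 \<le> (2 * real n + 1) * real m"
        by (simp add: algebra_simps)
      then have "(2 * real k + 1) / (real m)\<^sup>2 \<le> (2 * real n + 1) * real m / (real m)\<^sup>2"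
        by (intro divide_right_mono) auto
      also have "\<dots> = (2 * real n + 1) / real m"
        using m by (simp add: power2_eq_square)
      finally have "(2 * real k + 1) / (real m)\<^sup>2 \<le> (2 * real n + 1) / real m" .
      then have "c * ((2 * real k + 1) / (real m)\<^sup>2) \<le> c * ((2 * real n + 1) / real m)"
        using c_pos by (intro mult_left_mono) auto
      then show ?thesis
        using c_pos by (intro power_mono) auto
    qed
    finally show ?thesis .
  qed
  have "prob (crowded_shells n m) \<le> (\<Sum>k\<le>n * m. prob (E k))"
    unfolding crowded_shells_def E_def[symmetric] using E_sets by (intro finite_measure_subadditive_finite) auto
  also have "\<dots> \<le> real (card {..n * m}) * (c * ((2 * real n + 1) / real m))\<^sup>2"
    using prob_E by (intro sum_bounded_above) auto
  also have "\<dots> = (real n * real m + 1) * (c * (2 * real n + 1))\<^sup>2 / (real m)\<^sup>2"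
    by (simp add: power_divide power_mult_distrib)
  also have "\<dots> \<le> (real n + 1) * real m * (c * (2 * real n + 1))\<^sup>2 / (real m)\<^sup>2"
    using m by (intro divide_right_mono mult_right_mono) (auto simp: algebra_simps)
  also have "\<dots> = (real n + 1) * (c * (2 * real n + 1))\<^sup>2 / real m"
    using m by (simp add: power2_eq_square)
  finally show ?thesis .
qed

lemma null_crowded_shells: "(\<Inter>m. crowded_shells n (Suc m)) \<in> null_sets M"
proof -
  define C where "C = (real n + 1) * (c * (2 * real n + 1))\<^sup>2"
  have "prob (\<Inter>m. crowded_shells n (Suc m)) \<le> prob (crowded_shells n (Suc m))" for m
    by (intro finite_measure_mono crowded_shells_sets) auto
  then have "prob (\<Inter>m. crowded_shells n (Suc m)) \<le> C / real (Suc m)" for m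
    using prob_crowded_shells_le[of "Suc m" n] unfolding C_def by (meson order_trans zero_less_Suc)
  moreover have "(\<lambda>m. C / real (Suc m)) \<longlonglongrightarrow> 0"
    by real_asymp
  ultimately have "prob (\<Inter>m. crowded_shells n (Suc m)) \<le> 0"
    by (intro tendsto_lowerbound[where F=sequentially]) (auto intro: always_eventually)
  then show ?thesis
    using crowded_shells_sets by (auto simp: null_sets_def emeasure_eq_measure intro: antisym)
qed

lemma tie_in_crowded_shells:
  assumes "\<omega> \<in> space M" "p \<in> N \<omega>" "q \<in> N \<omega>" "p \<noteq> q" "D p = D q" "D p \<le> real n" "0 < m"
  shows "\<omega> \<in> crowded_shells n m"
proof -
  define k where "k = nat \<lfloor>D p * m\<rfloor>"
  have "real k = of_int \<lfloor>D p * m\<rfloor>"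
    using D_nonneg[of p] unfolding k_def by simp
  then have k: "real k \<le> D p * m" "D p * m < real k + 1"
    by linarith+
  then have "real k \<le> real n * real m" using assms(6,7) by (smt (verit) mult_right_mono of_nat_0_le_iff)
  then have "k \<le> n * m" by (simp flip: of_nat_mult)
  let ?S = "{x. real k / m \<le> D x \<and> D x < (real k + 1) / m}"
  have "{p, q} \<subseteq> N \<omega> \<inter> ?S"
    using assms k by (auto simp: divide_le_eq less_divide_eq)
  then have "\<not> (finite (N \<omega> \<inter> ?S) \<and> card (N \<omega> \<inter> ?S) \<le> 1)"
    using assms(4) card_mono[of "N \<omega> \<inter> ?S" "{p, q}"] by auto
  then show ?thesis
    unfolding crowded_shells_def using \<open>k \<le> n * m\<close> assms(1) by blast
qed

lemma AE_unique_nearest: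
  obtains Z where "Z \<in> null_sets M"
    and "\<And>\<omega>. \<omega> \<in> space M - Z \<Longrightarrow> \<exists>p0\<in>N \<omega>. 0 < D p0 \<and> (\<forall>q\<in>N \<omega>. q \<noteq> p0 \<longrightarrow> D p0 < D q)"
proof
  define Z where "Z = (\<Union>n. {\<omega>\<in>space M. infinite (N \<omega> \<inter> {p. D p \<le> real n})})
    \<union> {\<omega>\<in>space M. N \<omega> \<inter> {p. D p \<le> 0} \<noteq> {}}
    \<union> (\<Inter>n. {\<omega>\<in>space M. N \<omega> \<inter> {p. D p \<le> real n} = {}})
    \<union> (\<Union>n. \<Inter>m. crowded_shells n (Suc m))"
  show "Z \<in> null_sets M"
    unfolding Z_def
    by (intro null_sets.Un null_sets_UN null_infinite null_point_at_zero null_no_point null_crowded_shells)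
      auto
  fix \<omega> assume \<omega>: "\<omega> \<in> space M - Z"
  then obtain n :: nat where "N \<omega> \<inter> {p. D p \<le> real n} \<noteq> {}" "finite (N \<omega> \<inter> {p. D p \<le> real n})"
    by (auto simp: Z_def)
  then obtain p0 where p0: "p0 \<in> N \<omega>" "D p0 \<le> real n"
    and min: "\<And>q. q \<in> N \<omega> \<Longrightarrow> D q \<le> real n \<Longrightarrow> D p0 \<le> D q"
    using ex_is_arg_min_if_finite[of "N \<omega> \<inter> {p. D p \<le> real n}" D]
    by (auto simp: is_arg_min_linorder)
  have le: "D p0 \<le> D q" if "q \<in> N \<omega>" for q
    using min[OF that] p0(2) by fastforce
  have "0 < D p0"
    using \<omega> p0(1) D_nonneg[of p0] by (fastforce simp: Z_def)
  moreover have "D p0 < D q" if "q \<in> N \<omega>" "q \<noteq> p0" for q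
  proof -
    have "\<omega> \<notin> (\<Inter>m. crowded_shells n (Suc m))" using \<omega> by (auto simp: Z_def)
    then have "D p0 \<noteq> D q"
      using \<omega> tie_in_crowded_shells[of \<omega> p0 q n] that p0 by (metis Diff_iff INT_I zero_less_Suc)
    then show ?thesis using le[OF that(1)] by simp
  qed
  ultimately show "\<exists>p0\<in>N \<omega>. 0 < D p0 \<and> (\<forall>q\<in>N \<omega>. q \<noteq> p0 \<longrightarrow> D p0 < D q)"
    using p0(1) by blast
qed

lemma prob_nearest_distance:
  assumes S: "S \<subseteq> space M" and Z: "Z \<in> null_sets M"
    and event: "\<And>\<omega>. \<omega> \<in> space M - Z \<Longrightarrow> \<omega> \<in> S \<longleftrightarrow> Inf (D ` N \<omega>) \<in> W"
    and \<xi>: "0 \<le> \<xi>" and W: "{\<xi><..} \<subseteq> W" "W \<subseteq> {\<xi>..}"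
  shows "measure (completion M) S = exp (- c * \<xi>\<^sup>2)"
proof -
  obtain Z' where Z': "Z' \<in> null_sets M"
    and nearest: "\<And>\<omega>. \<omega> \<in> space M - Z' \<Longrightarrow> \<exists>p0\<in>N \<omega>. \<forall>q\<in>N \<omega>. D p0 \<le> D q"
    using AE_unique_nearest by (metis less_imp_le order_refl)
  have void: "N \<omega> \<inter> {p. D p \<le> \<xi>} = {} \<longleftrightarrow> \<xi> < Inf (D ` N \<omega>)"
    "N \<omega> \<inter> {p. D p < \<xi>} = {} \<longleftrightarrow> \<xi> \<le> Inf (D ` N \<omega>)" if \<omega>: "\<omega> \<in> space M - Z'" for \<omega>
  proof -
    obtain p0 where "p0 \<in> N \<omega>" "\<forall>q\<in>N \<omega>. D p0 \<le> D q" using nearest[OF \<omega>] by blast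
    moreover from this have "Inf (D ` N \<omega>) = D p0" by (intro cInf_eq_minimum) auto
    ultimately show "N \<omega> \<inter> {p. D p \<le> \<xi>} = {} \<longleftrightarrow> \<xi> < Inf (D ` N \<omega>)"
      "N \<omega> \<inter> {p. D p < \<xi>} = {} \<longleftrightarrow> \<xi> \<le> Inf (D ` N \<omega>)"
      by (auto simp: not_le not_less intro: order.trans order.strict_trans2)
  qed
  show ?thesis
  proof (rule measure_completion_squeeze[OF prob_space_axioms void_le_sets[OF \<xi>] void_less_sets[OF \<xi>]
        _ null_sets.Un[OF Z Z'] S _ _ prob_void_le[OF \<xi>] prob_void_less[OF \<xi>]])
    show "{\<omega>\<in>space M. N \<omega> \<inter> {p. D p \<le> \<xi>} = {}} - (Z \<union> Z') \<subseteq> S"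
      using event void W(1) by fastforce
    show "S - (Z \<union> Z') \<subseteq> {\<omega>\<in>space M. N \<omega> \<inter> {p. D p < \<xi>} = {}}"
      using S event void W(2) by fastforce
  qed auto
qed

end

section \<open>The bipole model\<close>

lemma sets_bipole_intensity [measurable_cong]:
  "sets (bipole_intensity lam) = sets (lborel \<Otimes>\<^sub>M (lborel :: real measure) :: (complex \<times> real) measure)"
  unfolding bipole_intensity_def by simp

lemma emeasure_bipole_intensity_sections:
  fixes lam a :: real
  assumes lam: "0 \<le> lam"
    and A: "A \<in> sets (lborel \<Otimes>\<^sub>M (lborel :: real measure) :: (complex \<times> real) measure)"
    and sections: "\<And>\<theta>. emeasure lborel {x. (x, \<theta>) \<in> A} = ennreal (pi * a\<^sup>2)"
  shows "emeasure (bipole_intensity lam) A = ennreal (lam * pi * a\<^sup>2)"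
proof -
  let ?f = "\<lambda>\<theta>. ennreal (lam / (2 * pi)) * indicator {0..<2 * pi} \<theta>"
  have "emeasure (bipole_intensity lam) A = (\<integral>\<^sup>+ p. ?f (snd p) * indicator A p \<partial>(lborel \<Otimes>\<^sub>M lborel))"
    unfolding bipole_intensity_def using A by (subst emeasure_density) (auto simp: case_prod_beta)
  also have "\<dots> = (\<integral>\<^sup>+ \<theta>. \<integral>\<^sup>+ x. ?f \<theta> * indicator {x. (x, \<theta>) \<in> A} x \<partial>lborel \<partial>lborel)"
    using A by (subst lborel_pair.nn_integral_snd[symmetric]) (auto simp: indicator_def)
  also have "\<dots> = (\<integral>\<^sup>+ \<theta>. ennreal (lam / (2 * pi) * (pi * a\<^sup>2)) * indicator {0..<2 * pi} \<theta> \<partial>lborel)"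
  proof (intro nn_integral_cong)
    fix \<theta> :: real
    have "{x. (x, \<theta>) \<in> A} \<in> sets lborel"
      using sets_Pair2[OF A, of \<theta>] by (simp add: vimage_def)
    then have "(\<integral>\<^sup>+ x. ?f \<theta> * indicator {x. (x, \<theta>) \<in> A} x \<partial>lborel) = ?f \<theta> * ennreal (pi * a\<^sup>2)"
      by (simp add: nn_integral_cmult_indicator sections)
    also have "\<dots> = ennreal (lam / (2 * pi) * (pi * a\<^sup>2)) * indicator {0..<2 * pi} \<theta>"
      using ennreal_mult[of "lam / (2 * pi)" "pi * a\<^sup>2"] lam by (simp split: split_indicator)
    finally show "(\<integral>\<^sup>+ x. ?f \<theta> * indicator {x. (x, \<theta>) \<in> A} x \<partial>lborel)
        = ennreal (lam / (2 * pi) * (pi * a\<^sup>2)) * indicator {0..<2 * pi} \<theta>" .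
  qed
  also have "\<dots> = ennreal (lam * pi * a\<^sup>2)"
    using lam by (simp add: nn_integral_cmult_indicator ennreal_mult'[symmetric])
  finally show ?thesis .
qed

lemma borel_measurable_cis [measurable]: "cis \<in> borel_measurable borel"
  by (intro borel_measurable_continuous_onI continuous_intros)

lemma receiver_distance_measurable [measurable]:
  "(\<lambda>p. cmod (receiver r p)) \<in> borel_measurable (lborel \<Otimes>\<^sub>M lborel)"
  unfolding receiver_def by measurable

lemma poisson_radial_bipole:
  assumes "0 < lam" "poisson_pp M (bipole_intensity lam) N"
  shows "poisson_radial M (bipole_intensity lam) N (\<lambda>p. cmod (receiver r p)) (lam * pi)"
proof
  have sec_le: "{x. cmod (receiver r (x, \<theta>)) \<le> a} = cball (- (complex_of_real r * cis \<theta>)) a" for a \<theta>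
    by (auto simp: receiver_def dist_norm norm_minus_commute add.commute)
  have sec_less: "{x. cmod (receiver r (x, \<theta>)) < a} = ball (- (complex_of_real r * cis \<theta>)) a" for a \<theta>
    by (auto simp: receiver_def dist_norm norm_minus_commute add.commute)
  show "{p. cmod (receiver r p) \<le> a} \<in> sets (bipole_intensity lam)" for a
    using measurable_sets[OF receiver_distance_measurable[of r], of "{..a}"]
    by (simp add: vimage_def space_pair_measure)
  show "{p. cmod (receiver r p) < a} \<in> sets (bipole_intensity lam)" for a
    using measurable_sets[OF receiver_distance_measurable[of r], of "{..<a}"]
    by (simp add: vimage_def space_pair_measure)
  show "emeasure (bipole_intensity lam) {p. cmod (receiver r p) \<le> a} = ennreal (lam * pi * a\<^sup>2)"
    if "0 \<le> a" for a
    using that assms measurable_sets[OF receiver_distance_measurable[of r], of "{..a}"]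
    by (intro emeasure_bipole_intensity_sections)
       (auto simp: sec_le emeasure_lborel_ball_complex vimage_def space_pair_measure)
  show "emeasure (bipole_intensity lam) {p. cmod (receiver r p) < a} = ennreal (lam * pi * a\<^sup>2)"
    if "0 \<le> a" for a
    using that assms measurable_sets[OF receiver_distance_measurable[of r], of "{..<a}"]
    by (intro emeasure_bipole_intensity_sections)
       (auto simp: sec_less emeasure_lborel_ball_complex vimage_def space_pair_measure)
qed (use assms in auto)

lemma xi_sublevel:
  fixes lam T r \<beta> \<rho> :: real
  assumes "0 < lam" "0 < T" "0 < r" "2 < \<beta>" "0 \<le> \<rho>" "\<rho> \<le> 1"
  shows "0 \<le> xi lam T r \<beta> \<rho>"
    and "{xi lam T r \<beta> \<rho><..} \<subseteq> {x. 0 < x \<and> xi_criterion lam T r \<beta> \<rho> x < 1}"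
    and "{x. 0 < x \<and> xi_criterion lam T r \<beta> \<rho> x < 1} \<subseteq> {xi lam T r \<beta> \<rho>..}"
    and "0 < \<rho> \<Longrightarrow> {x. 0 < x \<and> xi_criterion lam T r \<beta> \<rho> x \<le> 1} \<subseteq> {xi lam T r \<beta> \<rho>..}"
proof -
  let ?F = "xi_criterion lam T r \<beta> \<rho>"
  have antimono: "?F y \<le> ?F x" if "0 < x" "x \<le> y" for x y
    using xi_criterion_antimono(1)[OF assms that] .
  note Inf = Inf_sublevel_antimono[of ?F, OF antimono xi_criterion_eventually_less_1[OF assms],
      folded xi_eq_Inf_xi_criterion]
  show "0 \<le> xi lam T r \<beta> \<rho>" by (rule Inf(1))
  show "{xi lam T r \<beta> \<rho><..} \<subseteq> {x. 0 < x \<and> ?F x < 1}" using Inf(2) by blast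
  show "{x. 0 < x \<and> ?F x < 1} \<subseteq> {xi lam T r \<beta> \<rho>..}" using Inf(3) by blast
  show "{x. 0 < x \<and> ?F x \<le> 1} \<subseteq> {xi lam T r \<beta> \<rho>..}" if "0 < \<rho>"
  proof -
    have "?F y < ?F x" if "0 < x" "x < y" for x y
      using xi_criterion_antimono(2)[OF assms that(1) \<open>0 < \<rho>\<close> that(2)] .
    then show ?thesis using Inf(4) by blast
  qed
qed

lemma psi_R1_unique_nearest:
  fixes lam T r \<beta> :: real
  assumes "0 < lam" "0 < T" "0 < r" "2 < \<beta>"
    and p0: "p0 \<in> P" "0 < cmod (receiver r p0)"
    and nearest: "\<And>q. q \<in> P \<Longrightarrow> q \<noteq> p0 \<Longrightarrow> cmod (receiver r p0) < cmod (receiver r q)"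
  shows "closest_rx r P = cmod (receiver r p0)"
    and "\<And>\<rho>. 0 \<le> \<rho> \<Longrightarrow> \<rho> < 1 \<Longrightarrow>
           \<rho> < psi_R1 lam T r \<beta> P \<longleftrightarrow> xi_criterion lam T r \<beta> \<rho> (closest_rx r P) < 1"
    and "psi_R1 lam T r \<beta> P = 1 \<longleftrightarrow> xi_criterion lam T r \<beta> 1 (closest_rx r P) \<le> 1"
proof -
  have le: "cmod (receiver r p0) \<le> cmod (receiver r q)" if "q \<in> P" for q
    using nearest[OF that] by (cases "q = p0") auto
  show R: "closest_rx r P = cmod (receiver r p0)"
    unfolding closest_rx_def image_image using p0(1) le by (intro cInf_eq_minimum) auto
  have single: "receiver r ` P \<inter> cball 0 (closest_rx r P) = {receiver r p0}"
  proof (intro equalityI subsetI)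
    fix y assume "y \<in> receiver r ` P \<inter> cball 0 (closest_rx r P)"
    then obtain q where "q \<in> P" "y = receiver r q" "cmod (receiver r q) \<le> cmod (receiver r p0)"
      unfolding R by auto
    then show "y \<in> {receiver r p0}" using nearest[of q] by force
  qed (use p0(1) R in auto)
  have "0 < closest_rx r P" "cmod (receiver r p0) = closest_rx r P"
    using R p0(2) by simp_all
  note MAP = opt_MAP_single_receiver[OF assms(1-4) this(1) single this(2), folded psi_R1_def]
  show "\<And>\<rho>. 0 \<le> \<rho> \<Longrightarrow> \<rho> < 1 \<Longrightarrow>
           \<rho> < psi_R1 lam T r \<beta> P \<longleftrightarrow> xi_criterion lam T r \<beta> \<rho> (closest_rx r P) < 1"
    by (rule MAP(1))
  show "psi_R1 lam T r \<beta> P = 1 \<longleftrightarrow> xi_criterion lam T r \<beta> 1 (closest_rx r P) \<le> 1"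
    by (rule MAP(2))
qed

lemma prob_closest_rx_event:
  assumes "0 < lam" "poisson_pp M (bipole_intensity lam) N"
    and S: "S \<subseteq> space M" and Z: "Z \<in> null_sets M"
    and event: "\<And>\<omega>. \<omega> \<in> space M - Z \<Longrightarrow> \<omega> \<in> S \<longleftrightarrow> closest_rx r (N \<omega>) \<in> W"
    and \<xi>: "0 \<le> \<xi>" "{\<xi><..} \<subseteq> W" "W \<subseteq> {\<xi>..}"
  shows "measure (completion M) S = exp (- lam * pi * \<xi>\<^sup>2)"
proof -
  interpret poisson_radial M "bipole_intensity lam" N "\<lambda>p. cmod (receiver r p)" "lam * pi"
    using poisson_radial_bipole assms(1,2) .
  show ?thesis
    using prob_nearest_distance[OF S Z _ \<xi>] event by (simp add: closest_rx_def image_image)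
qed

lemma AE_psi_R1_threshold:
  fixes lam T r \<beta> :: real
  assumes "0 < lam" "0 < T" "0 < r" "2 < \<beta>" "poisson_pp M (bipole_intensity lam) N"
  obtains Z where "Z \<in> null_sets M"
    and "\<And>\<omega>. \<omega> \<in> space M - Z \<Longrightarrow> 0 < closest_rx r (N \<omega>)"
    and "\<And>\<omega> \<rho>. \<omega> \<in> space M - Z \<Longrightarrow> 0 \<le> \<rho> \<Longrightarrow> \<rho> < 1 \<Longrightarrow>
       \<rho> < psi_R1 lam T r \<beta> (N \<omega>) \<longleftrightarrow> xi_criterion lam T r \<beta> \<rho> (closest_rx r (N \<omega>)) < 1"
    and "\<And>\<omega>. \<omega> \<in> space M - Z \<Longrightarrow>
       psi_R1 lam T r \<beta> (N \<omega>) = 1 \<longleftrightarrow> xi_criterion lam T r \<beta> 1 (closest_rx r (N \<omega>)) \<le> 1"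
proof -
  let ?D = "\<lambda>p. cmod (receiver r p)"
  interpret poisson_radial M "bipole_intensity lam" N ?D "lam * pi"
    using poisson_radial_bipole assms(1,5) .
  obtain Z where Z: "Z \<in> null_sets M"
    and nearest: "\<And>\<omega>. \<omega> \<in> space M - Z \<Longrightarrow> \<exists>p0\<in>N \<omega>. 0 < ?D p0 \<and> (\<forall>q\<in>N \<omega>. q \<noteq> p0 \<longrightarrow> ?D p0 < ?D q)"
    using AE_unique_nearest by blast
  have "0 < closest_rx r (N \<omega>) \<and>
      (\<forall>\<rho>. 0 \<le> \<rho> \<longrightarrow> \<rho> < 1 \<longrightarrow>
         \<rho> < psi_R1 lam T r \<beta> (N \<omega>) \<longleftrightarrow> xi_criterion lam T r \<beta> \<rho> (closest_rx r (N \<omega>)) < 1) \<and>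
      (psi_R1 lam T r \<beta> (N \<omega>) = 1 \<longleftrightarrow> xi_criterion lam T r \<beta> 1 (closest_rx r (N \<omega>)) \<le> 1)"
    if \<omega>: "\<omega> \<in> space M - Z" for \<omega>
  proof -
    obtain p0 where p0: "p0 \<in> N \<omega>" "0 < ?D p0" "\<And>q. q \<in> N \<omega> \<Longrightarrow> q \<noteq> p0 \<Longrightarrow> ?D p0 < ?D q"
      using nearest[OF \<omega>] by blast
    note psi = psi_R1_unique_nearest[OF assms(1-4) p0]
    show ?thesis using psi p0(2) by simp
  qed
  with Z that show ?thesis by blast
qed

theorem theorem4p3:
  fixes M :: "'w measure" and N :: "'w \<Rightarrow> (complex \<times> real) set"
    and lam T r \<beta> :: real
  assumes "0 < lam" and "0 < T" and "0 < r" and "2 < \<beta>"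
    and "poisson_pp M (bipole_intensity lam) N"
  shows "(\<forall>\<rho>. 0 \<le> \<rho> \<and> \<rho> < 1 \<longrightarrow>
            measure (completion M) {\<omega>\<in>space M. \<rho> < psi_R1 lam T r \<beta> (N \<omega>)}
              = exp (- lam * pi * (xi lam T r \<beta> \<rho>)\<^sup>2))
       \<and> measure (completion M) {\<omega>\<in>space M. psi_R1 lam T r \<beta> (N \<omega>) = 1}
              = exp (- lam * pi * (xi lam T r \<beta> 1)\<^sup>2)"
proof -
  obtain Z where Z: "Z \<in> null_sets M" and R_pos: "\<And>\<omega>. \<omega> \<in> space M - Z \<Longrightarrow> 0 < closest_rx r (N \<omega>)"
    and psi_gt: "\<And>\<omega> \<rho>. \<omega> \<in> space M - Z \<Longrightarrow> 0 \<le> \<rho> \<Longrightarrow> \<rho> < 1 \<Longrightarrow>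
       \<rho> < psi_R1 lam T r \<beta> (N \<omega>) \<longleftrightarrow> xi_criterion lam T r \<beta> \<rho> (closest_rx r (N \<omega>)) < 1"
    and psi_1: "\<And>\<omega>. \<omega> \<in> space M - Z \<Longrightarrow>
       psi_R1 lam T r \<beta> (N \<omega>) = 1 \<longleftrightarrow> xi_criterion lam T r \<beta> 1 (closest_rx r (N \<omega>)) \<le> 1"
    using AE_psi_R1_threshold[OF assms] by blast
  show ?thesis
  proof (intro conjI allI impI)
    fix \<rho> :: real assume "0 \<le> \<rho> \<and> \<rho> < 1"
    then show "measure (completion M) {\<omega>\<in>space M. \<rho> < psi_R1 lam T r \<beta> (N \<omega>)}
        = exp (- lam * pi * (xi lam T r \<beta> \<rho>)\<^sup>2)"
      using R_pos psi_gt xi_sublevel[OF assms(1-4), of \<rho>]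
      by (intro prob_closest_rx_event[where r=r and W="{x. 0 < x \<and> xi_criterion lam T r \<beta> \<rho> x < 1}",
          OF assms(1,5) _ Z]) auto
  next
    show "measure (completion M) {\<omega>\<in>space M. psi_R1 lam T r \<beta> (N \<omega>) = 1}
        = exp (- lam * pi * (xi lam T r \<beta> 1)\<^sup>2)"
      using R_pos psi_1 xi_sublevel[OF assms(1-4), of 1]
      by (intro prob_closest_rx_event[where r=r and W="{x. 0 < x \<and> xi_criterion lam T r \<beta> 1 x \<le> 1}",
          OF assms(1,5) _ Z]) fastforce+
  qed
qed

end
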